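(* Let $(\mathbf{x}_t,\mathbf{z}_t,\mathbf{y}_t)_{t\ge0}$ be generated by generalized Bregman ADMM under the standing assumptions and Assumption 1, and let $(\mathbf{x}^*,\mathbf{z}^*,\mathbf{y}^* )$ be a KKT point. Let $\sigma=\min\{1,m^{\frac{2}{p}-1}\}$, let $0<\gamma<\frac{\alpha\sigma}{2}$, and suppose $\tau\le(\alpha\sigma-2\gamma)\rho$. Then for every $t\ge0$, $$R(t+1)\le D(\mathbf{w}^*,\mathbf{w}_t)-D(\mathbf{w}^*,\mathbf{w}_{t+1}).$$
   Context: Problem: $f:\mathbb{R}^{n_1}\to\mathbb{R}\cup\{+\infty\}$ and $g:\mathbb{R}^{n_2}\to\mathbb{R}\cup\{+\infty\}$; $\mathbf{A}\in\mathbb{R}^{m\times n_1}$, $\mathbf{B}\in\mathbb{R}^{m\times n_2}$, $\mathbf{c}\in\mathbb{R}^m$; $\mathcal{X}\subseteq\mathbb{R}^{n_1}$, $\mathcal{Z}\subseteq\mathbb{R}^{n_2}$ convex; the problem is $\min f(\mathbf{x})+g(\mathbf{z})$ s.t. $\mathbf{x}\in\mathcal{X},\mathbf{z}\in\mathcal{Z},\mathbf{A}\mathbf{x}+\mathbf{B}\mathbf{z}=\mathbf{c}$. For a continuously differentiable, strictly convex function $\psi$ on (the relative interior of) a convex set, $B_\psi(\mathbf{u},\mathbf{v})=\psi(\mathbf{u})-\psi(\mathbf{v})-\langle\nabla\psi(\mathbf{v}),\mathbf{u}-\mathbf{v}\rangle\ge 0$. Three such functions are fixed: $\phi$ (on a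 convex subset of $\mathbb{R}^m$), $\varphi_{\mathbf{x}}$ (on $\mathbb{R}^{n_1}$ or a convex subset), $\varphi_{\mathbf{z}}$ (on $\mathbb{R}^{n_2}$ or a convex subset). Generalized Bregman ADMM: given $(\mathbf{x}_0,\mathbf{z}_0,\mathbf{y}_0)$ and parameters $\rho>0,\tau>0,\rho_{\mathbf{x}}\ge0,\rho_{\mathbf{z}}\ge0$, for $t\ge0$: $\mathbf{x}_{t+1}=\arg\min_{\mathbf{x}\in\mathcal{X}} f(\mathbf{x})+\langle\mathbf{y}_t,\mathbf{A}\mathbf{x}+\mathbf{B}\mathbf{z}_t-\mathbf{c}\rangle+\rho B_\phi(\mathbf{c}-\mathbf{A}\mathbf{x},\mathbf{B}\mathbf{z}_t)+\rho_{\mathbf{x}}B_{\varphi_{\mathbf{x}}}(\mathbf{x},\mathbf{x}_t)$; $\mathbf{z}_{t+1}=\arg\min_{\mathbf{z}\in\mathcal{Z}} g(\mathbf{z})+\langle\mathbf{y}_t,\mathbf{A}\mathbf{x}_{t+1}+\mathbf{B}\mathbf{z}-\mathbf{c}\rangle+\rho B_\phi(\mathbf{B}\mathbf{z},\mathbf{c}-\mathbf{A}\mathbf{x}_{t+1})+\rho_{\mathbf{z}}B_{\varphi_{\mathbf{z}}}(\mathbf{z},\mathbf{z}_t)$; $\mathbf{y}_{t+1}=\mathbf{y}_t+\tau(\mathbf{A}\mathbf{x}_{t+1}+\mathbf{B}\mathbf{z}_{t+1}-\mathbf{c})$. Standing assumptions: the minimizers exist; all Bregman divergences are evaluated at points where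 they are defined; and the minimizers satisfy the first-order optimality conditions $-\mathbf{A}^T\{\mathbf{y}_t+\rho(\nabla\phi(\mathbf{B}\mathbf{z}_t)-\nabla\phi(\mathbf{c}-\mathbf{A}\mathbf{x}_{t+1}))\}-\rho_{\mathbf{x}}(\nabla\varphi_{\mathbf{x}}(\mathbf{x}_{t+1})-\nabla\varphi_{\mathbf{x}}(\mathbf{x}_t))\in\partial f(\mathbf{x}_{t+1})$ and $-\mathbf{B}^T\{\mathbf{y}_t+\rho(\nabla\phi(\mathbf{B}\mathbf{z}_{t+1})-\nabla\phi(\mathbf{c}-\mathbf{A}\mathbf{x}_{t+1}))\}-\rho_{\mathbf{z}}(\nabla\varphi_{\mathbf{z}}(\mathbf{z}_{t+1})-\nabla\varphi_{\mathbf{z}}(\mathbf{z}_t))\in\partial g(\mathbf{z}_{t+1})$. Assumption 1: (a) $f,g$ are closed, proper, convex; (b) an optimal solution exists; (c) $\phi$ is $\alpha$-strongly convex w.r.t. a $p$-norm ($p>0$), i.e. $B_\phi(\mathbf{u},\mathbf{v})\ge\frac{\alpha}{2}\|\mathbf{u}-\mathbf{v}\|_p^2$ with $\alpha>0$. A KKT point is $(\mathbf{x}^*,\mathbf{z}^*,\mathbf{y}^* )$ with $-\mathbf{A}^T\mathbf{y}^*\in\partial f(\mathbf{x}^* )$, $-\mathbf{B}^T\mathbf{y}^*\in\partial g(\mathbf{z}^* )$, $\mathbf{A}\mathbf{x}^*+\mathbf{B}\mathbf{z}^*=\mathbf{c}$. With $\mathbf{w}_t=(\mathbf{x}_t,\mathbf{z}_t,\mathbf{y}_t)$,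 $\mathbf{w}^*=(\mathbf{x}^*,\mathbf{z}^*,\mathbf{y}^* )$ and $\gamma>0$: $R(t+1)=\frac{\rho_{\mathbf{x}}}{\rho}B_{\varphi_{\mathbf{x}}}(\mathbf{x}_{t+1},\mathbf{x}_t)+\frac{\rho_{\mathbf{z}}}{\rho}B_{\varphi_{\mathbf{z}}}(\mathbf{z}_{t+1},\mathbf{z}_t)+B_\phi(\mathbf{c}-\mathbf{A}\mathbf{x}_{t+1},\mathbf{B}\mathbf{z}_t)+\gamma\|\mathbf{A}\mathbf{x}_{t+1}+\mathbf{B}\mathbf{z}_{t+1}-\mathbf{c}\|_2^2$, $D(\mathbf{w}^*,\mathbf{w}_t)=\frac{1}{2\tau\rho}\|\mathbf{y}^*-\mathbf{y}_t\|_2^2+B_\phi(\mathbf{B}\mathbf{z}^*,\mathbf{B}\mathbf{z}_t)+\frac{\rho_{\mathbf{x}}}{\rho}B_{\varphi_{\mathbf{x}}}(\mathbf{x}^*,\mathbf{x}_t)+\frac{\rho_{\mathbf{z}}}{\rho}B_{\varphi_{\mathbf{z}}}(\mathbf{z}^*,\mathbf{z}_t)$. *)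

theory Defs
  imports "HOL-Analysis.Analysis"
begin

text \<open>Extended-real-valued functions f : R^n -> R \<union> {+inf} are modelled as maps into ereal.\<close>

definition proper_fun :: "('a \<Rightarrow> ereal) \<Rightarrow> bool" where
  "proper_fun f \<longleftrightarrow> (\<forall>x. f x \<noteq> -\<infinity>) \<and> (\<exists>x. f x < \<infinity>)"

definition convex_efun :: "('a::real_vector \<Rightarrow> ereal) \<Rightarrow> bool" where
  "convex_efun f \<longleftrightarrow> (\<forall>x y. \<forall>\<theta>::real. 0 \<le> \<theta> \<and> \<theta> \<le> 1 \<longrightarrow>
      f (\<theta> *\<^sub>R x + (1 - \<theta>) *\<^sub>R y) \<le> ereal \<theta> * f x + ereal (1 - \<theta>) * f y)"

definition closed_efun :: "('a::topological_space \<Rightarrow> ereal) \<Rightarrow> bool" where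
  "closed_efun f \<longleftrightarrow> closed {(x, r::real). f x \<le> ereal r}"

definition subdiff :: "('a::real_inner \<Rightarrow> ereal) \<Rightarrow> 'a \<Rightarrow> 'a set" where
  "subdiff f x = {g. f x < \<infinity> \<and> (\<forall>u. f x + ereal (g \<bullet> (u - x)) \<le> f u)}"

definition strictly_convex_on :: "'a::real_vector set \<Rightarrow> ('a \<Rightarrow> real) \<Rightarrow> bool" where
  "strictly_convex_on S f \<longleftrightarrow> (\<forall>x\<in>S. \<forall>y\<in>S. \<forall>\<theta>::real. x \<noteq> y \<and> 0 < \<theta> \<and> \<theta> < 1 \<longrightarrow>
      f (\<theta> *\<^sub>R x + (1 - \<theta>) *\<^sub>R y) < \<theta> * f x + (1 - \<theta>) * f y)"

definition bregman_gen :: "'a::real_inner set \<Rightarrow> ('a \<Rightarrow> real) \<Rightarrow> ('a \<Rightarrow> 'a) \<Rightarrow> bool" where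
  "bregman_gen S psi gpsi \<longleftrightarrow> convex S \<and> strictly_convex_on S psi \<and>
     (\<forall>v\<in>S. (psi has_derivative (\<lambda>h. gpsi v \<bullet> h)) (at v within S)) \<and>
     continuous_on S gpsi"

definition breg :: "('a::real_inner \<Rightarrow> real) \<Rightarrow> ('a \<Rightarrow> 'a) \<Rightarrow> 'a \<Rightarrow> 'a \<Rightarrow> real" where
  "breg psi gpsi u v = psi u - psi v - gpsi v \<bullet> (u - v)"

definition pnorm :: "real \<Rightarrow> real^'m \<Rightarrow> real" where
  "pnorm p u = (\<Sum>i\<in>UNIV. \<bar>u $ i\<bar> powr p) powr (1 / p)"

end

theory Submission
  imports Defs
begin

text \<open>Monotonicity of the subdifferentials of f and g, tested between the iterate
  and the KKT point, turns the two first-order conditions into inner-product inequalities.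
  The three- and four-point identities for Bregman divergences rewrite those inner products
  as telescoping differences, and the dual update converts the multiplier term into
  the telescoping difference of squared distances to y* plus a multiple of the squared
  residual. What is left is the divergence between B z_{t+1} and c - A x_{t+1}, whose
  difference is the residual; strong convexity of phi, together with the comparison
  sigma |r|_2^2 \<le> |r|_p^2, makes it large enough to pay both for that multiple
  (this is where tau \<le> (alpha sigma - 2 gamma) rho enters) and for the gamma-term of R(t+1).\<close>

lemma subdiff_monotone:
  assumes "proper_fun f" and "g \<in> subdiff f x" and "h \<in> subdiff f u"
  shows "(g - h) \<bullet> (u - x) \<le> 0"
proof -
  from assms(2) have gx: "f x < \<infinity>" "f x + ereal (g \<bullet> (u - x)) \<le> f u"
    by (auto simp: subdiff_def)
  from assms(3) have hu: "f u < \<infinity>" "f u + ereal (h \<bullet> (x - u)) \<le> f x"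
    by (auto simp: subdiff_def)
  from assms(1) have "f x \<noteq> -\<infinity>" "f u \<noteq> -\<infinity>"
    by (auto simp: proper_fun_def)
  then obtain a b where "f x = ereal a" "f u = ereal b"
    using gx(1) hu(1) by (metis ereal_cases less_ereal.simps(2) ereal_less_eq(1) less_irrefl)
  with gx(2) hu(2) have "a + g \<bullet> (u - x) \<le> b" "b + h \<bullet> (x - u) \<le> a"
    by auto
  moreover have "h \<bullet> (x - u) = - (h \<bullet> (u - x))"
    by (simp add: inner_diff_right)
  ultimately show ?thesis
    by (simp add: inner_diff_left)
qed

lemma breg_three_point:
  "(gpsi u1 - gpsi u0) \<bullet> (w - u1) = breg psi gpsi w u0 - breg psi gpsi w u1 - breg psi gpsi u1 u0"
  by (simp add: breg_def inner_diff_left inner_diff_right algebra_simps)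

lemma breg_four_point:
  "(gpsi v0 - gpsi a) \<bullet> (a - w) + (gpsi v1 - gpsi a) \<bullet> (w - v1)
   = breg psi gpsi w v0 - breg psi gpsi w v1 - breg psi gpsi a v0 - breg psi gpsi v1 a"
  by (simp add: breg_def inner_diff_left inner_diff_right algebra_simps)

lemma inner_transpose_subgradient_diff:
  fixes M :: "real^'n^'m"
  shows "((- (transpose M *v (v + k *\<^sub>R d)) - k' *\<^sub>R e) - (- (transpose M *v w))) \<bullet> u
    = (w - v) \<bullet> (M *v u) - k * (d \<bullet> (M *v u)) - k' * (e \<bullet> u)"
proof -
  have "(- (transpose M *v (v + k *\<^sub>R d)) - k' *\<^sub>R e) - (- (transpose M *v w))
      = transpose M *v (w - v - k *\<^sub>R d) - k' *\<^sub>R e"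
    by (simp add: matrix_vector_mult_diff_distrib matrix_vector_right_distrib algebra_simps)
  then show ?thesis
    by (simp add: inner_diff_left dot_lmul_matrix algebra_simps)
qed

lemma admm_step_variational_inequality:
  fixes A :: "real^'n1^'m" and B :: "real^'n2^'m"
  assumes "proper_fun f" and "proper_fun g"
    and "- (transpose A *v (y0 + rho *\<^sub>R (gphi (B *v z0) - gphi (c - A *v x1))))
        - rhox *\<^sub>R (gx x1 - gx x0) \<in> subdiff f x1"
    and "- (transpose B *v (y0 + rho *\<^sub>R (gphi (B *v z1) - gphi (c - A *v x1))))
        - rhoz *\<^sub>R (gz z1 - gz z0) \<in> subdiff g z1"
    and "- (transpose A *v ys) \<in> subdiff f xs" and "- (transpose B *v ys) \<in> subdiff g zs"
    and "A *v xs + B *v zs = c"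
  shows "rhox * breg phix gx x1 x0 + rhoz * breg phiz gz z1 z0
      + rho * breg phi gphi (c - A *v x1) (B *v z0) + rho * breg phi gphi (B *v z1) (c - A *v x1)
    \<le> (ys - y0) \<bullet> (A *v x1 + B *v z1 - c)
      + rho * (breg phi gphi (B *v zs) (B *v z0) - breg phi gphi (B *v zs) (B *v z1))
      + rhox * (breg phix gx xs x0 - breg phix gx xs x1)
      + rhoz * (breg phiz gz zs z0 - breg phiz gz zs z1)"
proof -
  define a where "a = c - A *v x1"
  have Ax: "A *v (xs - x1) = a - B *v zs"
    using assms(7) by (simp add: a_def matrix_vector_mult_diff_distrib algebra_simps)
  have Bz: "B *v (zs - z1) = B *v zs - B *v z1"
    by (simp add: matrix_vector_mult_diff_distrib)
  have x_ineq: "(ys - y0) \<bullet> (a - B *v zs) - rho * ((gphi (B *v z0) - gphi a) \<bullet> (a - B *v zs))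
      - rhox * ((gx x1 - gx x0) \<bullet> (xs - x1)) \<le> 0"
    using subdiff_monotone[OF assms(1,3,5)]
    unfolding inner_transpose_subgradient_diff Ax a_def .
  have z_ineq: "(ys - y0) \<bullet> (B *v zs - B *v z1) - rho * ((gphi (B *v z1) - gphi a) \<bullet> (B *v zs - B *v z1))
      - rhoz * ((gz z1 - gz z0) \<bullet> (zs - z1)) \<le> 0"
    using subdiff_monotone[OF assms(2,4,6)]
    unfolding inner_transpose_subgradient_diff Bz a_def .
  have "(ys - y0) \<bullet> (a - B *v zs) + (ys - y0) \<bullet> (B *v zs - B *v z1)
      = - ((ys - y0) \<bullet> (A *v x1 + B *v z1 - c))"
    by (simp add: a_def inner_diff_right inner_add_right algebra_simps)
  moreover have "rho * ((gphi (B *v z0) - gphi a) \<bullet> (a - B *v zs))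
      + rho * ((gphi (B *v z1) - gphi a) \<bullet> (B *v zs - B *v z1))
    = rho * (breg phi gphi (B *v zs) (B *v z0) - breg phi gphi (B *v zs) (B *v z1))
      - rho * breg phi gphi a (B *v z0) - rho * breg phi gphi (B *v z1) a"
    by (subst distrib_left[symmetric], subst breg_four_point[where psi = phi]) (simp add: algebra_simps)
  moreover have "rhox * ((gx x1 - gx x0) \<bullet> (xs - x1))
      = rhox * (breg phix gx xs x0 - breg phix gx xs x1) - rhox * breg phix gx x1 x0"
    unfolding breg_three_point[where psi = phix] by (simp add: algebra_simps)
  moreover have "rhoz * ((gz z1 - gz z0) \<bullet> (zs - z1))
      = rhoz * (breg phiz gz zs z0 - breg phiz gz zs z1) - rhoz * breg phiz gz z1 z0"
    unfolding breg_three_point[where psi = phiz] by (simp add: algebra_simps)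
  ultimately show ?thesis
    using x_ineq z_ineq unfolding a_def by linarith
qed

lemma inner_dual_step_eq:
  fixes w y0 r :: "'a::real_inner"
  assumes "tau \<noteq> 0"
  shows "(w - y0) \<bullet> r
    = ((norm (w - y0))\<^sup>2 - (norm (w - (y0 + tau *\<^sub>R r)))\<^sup>2) / (2 * tau) + tau / 2 * (norm r)\<^sup>2"
proof -
  have "(norm (w - (y0 + tau *\<^sub>R r)))\<^sup>2
      = (norm (w - y0))\<^sup>2 - 2 * tau * ((w - y0) \<bullet> r) + tau\<^sup>2 * (norm r)\<^sup>2"
    unfolding power2_norm_eq_inner
    by (simp add: inner_diff_left inner_diff_right inner_add_left inner_add_right inner_commute
        algebra_simps power2_eq_square)
  with assms show ?thesis
    by (simp add: field_simps power2_eq_square)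
qed

lemma powr_ge_tangent:
  fixes q mu x :: real
  assumes q: "q \<ge> 1" and mu: "mu > 0" and x: "x \<ge> 0"
  shows "mu powr q + q * mu powr (q - 1) * (x - mu) \<le> x powr q"
proof (cases "x = 0")
  case True
  have "mu powr q = mu * mu powr (q - 1)"
    using mu by (simp add: powr_diff)
  then have "mu powr q + q * mu powr (q - 1) * (x - mu) = (1 - q) * mu powr q"
    using True by (simp add: algebra_simps)
  also have "\<dots> \<le> 0"
    using q by (simp add: mult_nonpos_nonneg)
  finally show ?thesis
    using True by simp
next
  case False
  with x have "x > 0" by simp
  then have "q * mu powr (q - 1) * (x - mu) \<le> x powr q - mu powr q"
    by (intro convex_on_imp_above_tangent[where A = "{0<..}"])
       (use q mu in \<open>auto intro!: derivative_eq_intros powr_convex simp: interior_open\<close>)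
  then show ?thesis by simp
qed

lemma sum_le_powr_sum_powr:
  fixes s :: "'i \<Rightarrow> real"
  assumes "finite I" and s: "\<And>i. i \<in> I \<Longrightarrow> s i \<ge> 0" and q: "0 < q" "q \<le> 1"
  shows "sum s I \<le> (\<Sum>i\<in>I. s i powr q) powr (1 / q)"
proof (cases "sum s I = 0")
  case False
  define S where "S = sum s I"
  have S: "S > 0"
    using False s sum_nonneg[of I s] by (simp add: S_def)
  have "s i / S \<le> (s i / S) powr q" if "i \<in> I" for i
  proof -
    have "s i \<le> S"
      using s that assms(1) by (auto simp: S_def intro!: member_le_sum)
    then have "s i / S \<le> 1"
      using S by simp
    then have "(s i / S) powr 1 \<le> (s i / S) powr q"
      by (intro powr_mono') (use q s S that in auto)
    then show ?thesis
      using s[OF that] S by (cases "s i = 0") auto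
  qed
  then have "(\<Sum>i\<in>I. s i / S) \<le> (\<Sum>i\<in>I. (s i / S) powr q)"
    by (rule sum_mono)
  also have "\<dots> = (\<Sum>i\<in>I. s i powr q) / S powr q"
    using s S by (simp add: powr_divide sum_divide_distrib)
  finally have "S powr q \<le> (\<Sum>i\<in>I. s i powr q)"
    using S by (simp add: S_def field_simps flip: sum_divide_distrib)
  then have "(S powr q) powr (1 / q) \<le> (\<Sum>i\<in>I. s i powr q) powr (1 / q)"
    using S q by (intro powr_mono2) auto
  then show ?thesis
    using q S by (simp add: S_def powr_powr)
qed simp

text \<open>Jensen's inequality for t \<mapsto> t powr q, via the tangent at the mean.\<close>
lemma card_powr_mult_sum_le_powr_sum_powr:
  fixes s :: "'i \<Rightarrow> real"
  assumes "finite I" and s: "\<And>i. i \<in> I \<Longrightarrow> s i \<ge> 0" and q: "q \<ge> 1"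
  shows "real (card I) powr (1 / q - 1) * sum s I \<le> (\<Sum>i\<in>I. s i powr q) powr (1 / q)"
proof (cases "sum s I = 0")
  case False
  define S m where "S = sum s I" and "m = real (card I)"
  have S: "S > 0"
    using False s sum_nonneg[of I s] by (simp add: S_def)
  have m: "m > 0"
    using False assms(1) by (auto simp: m_def card_gt_0_iff)
  define mu where "mu = S / m"
  have mu: "mu > 0"
    using S m by (simp add: mu_def)
  have "(\<Sum>i\<in>I. mu powr q + q * mu powr (q - 1) * (s i - mu)) \<le> (\<Sum>i\<in>I. s i powr q)"
    by (intro sum_mono powr_ge_tangent[OF q mu s])
  moreover have "(\<Sum>i\<in>I. mu powr q + q * mu powr (q - 1) * (s i - mu)) = m * mu powr q"
    using m by (simp add: sum.distrib sum_subtractf m_def S_def[symmetric] mu_def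
        flip: sum_distrib_left)
  ultimately have "(m * mu powr q) powr (1 / q) \<le> (\<Sum>i\<in>I. s i powr q) powr (1 / q)"
    using m mu q by (intro powr_mono2) auto
  moreover have "(m * mu powr q) powr (1 / q) = m powr (1 / q - 1) * S"
    using m S q by (simp add: powr_mult powr_powr mu_def powr_diff)
  ultimately show ?thesis
    by (simp add: S_def m_def)
qed simp

lemma min_card_powr_mult_sum_le_powr_sum_powr:
  fixes s :: "'i \<Rightarrow> real"
  assumes "finite I" and "\<And>i. i \<in> I \<Longrightarrow> s i \<ge> 0" and "q > 0"
  shows "min 1 (real (card I) powr (1 / q - 1)) * sum s I \<le> (\<Sum>i\<in>I. s i powr q) powr (1 / q)"
proof -
  have "sum s I \<ge> 0"
    using assms(2) by (simp add: sum_nonneg)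
  then have "min 1 (real (card I) powr (1 / q - 1)) * sum s I
      \<le> (if q \<le> 1 then 1 else real (card I) powr (1 / q - 1)) * sum s I"
    by (intro mult_right_mono) auto
  also have "\<dots> \<le> (\<Sum>i\<in>I. s i powr q) powr (1 / q)"
    using sum_le_powr_sum_powr[OF assms(1,2)] card_powr_mult_sum_le_powr_sum_powr[OF assms(1,2)]
      assms(3) by auto
  finally show ?thesis .
qed

lemma pnorm_power2_ge:
  fixes r :: "real^'m"
  assumes p: "p > 0"
  shows "min 1 (real CARD('m) powr (2 / p - 1)) * (norm r)\<^sup>2 \<le> (pnorm p r)\<^sup>2"
proof -
  have abs_powr: "\<bar>r $ i\<bar> powr p = ((r $ i)\<^sup>2) powr (p / 2)" for i
  proof -
    have "\<bar>r $ i\<bar> powr p = (\<bar>r $ i\<bar> powr 2) powr (p / 2)"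
      by (simp only: powr_powr) simp
    also have "\<dots> = ((r $ i)\<^sup>2) powr (p / 2)"
      by simp
    finally show ?thesis .
  qed
  have "(pnorm p r)\<^sup>2 = ((\<Sum>i\<in>UNIV. \<bar>r $ i\<bar> powr p) powr (1 / p)) powr 2"
    by (simp add: pnorm_def powr_realpow' sum_nonneg)
  also have "\<dots> = (\<Sum>i\<in>UNIV. ((r $ i)\<^sup>2) powr (p / 2)) powr (1 / (p / 2))"
    by (simp add: powr_powr abs_powr)
  finally have "(pnorm p r)\<^sup>2 = (\<Sum>i\<in>UNIV. ((r $ i)\<^sup>2) powr (p / 2)) powr (1 / (p / 2))" .
  moreover have "(norm r)\<^sup>2 = (\<Sum>i\<in>UNIV. (r $ i)\<^sup>2)"
    by (simp add: norm_vec_def L2_set_def sum_nonneg)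
  moreover have "2 / p - 1 = 1 / (p / 2) - 1"
    by simp
  ultimately show ?thesis
    using min_card_powr_mult_sum_le_powr_sum_powr[of UNIV "\<lambda>i. (r $ i)\<^sup>2" "p / 2"] p by simp
qed

lemma residual_le_breg:
  fixes u v :: "real^'m"
  assumes strong: "breg phi gphi u v \<ge> alpha / 2 * (pnorm p (u - v))\<^sup>2"
    and "p > 0" and "alpha > 0" and "rho > 0"
    and tau: "tau \<le> (alpha * min 1 (real CARD('m) powr (2 / p - 1)) - 2 * gamma) * rho"
  shows "rho * gamma * (norm (u - v))\<^sup>2 + tau / 2 * (norm (u - v))\<^sup>2 \<le> rho * breg phi gphi u v"
proof -
  define \<sigma> where "\<sigma> = min 1 (real CARD('m) powr (2 / p - 1))"
  have "tau * (norm (u - v))\<^sup>2 \<le> (alpha * \<sigma> - 2 * gamma) * rho * (norm (u - v))\<^sup>2"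
    using tau by (intro mult_right_mono) (auto simp: \<sigma>_def)
  moreover have "alpha / 2 * (\<sigma> * (norm (u - v))\<^sup>2) \<le> alpha / 2 * (pnorm p (u - v))\<^sup>2"
    using pnorm_power2_ge[OF \<open>p > 0\<close>] \<open>alpha > 0\<close> by (simp add: \<sigma>_def)
  then have "rho * (alpha / 2 * (\<sigma> * (norm (u - v))\<^sup>2)) \<le> rho * breg phi gphi u v"
    using strong \<open>rho > 0\<close> by (intro mult_left_mono) auto
  ultimately show ?thesis
    by (simp add: algebra_simps)
qed

theorem lemma2:
  fixes f :: "real^'n1 \<Rightarrow> ereal" and g :: "real^'n2 \<Rightarrow> ereal"
    and A :: "real^'n1^'m" and B :: "real^'n2^'m" and c :: "real^'m"
    and X :: "(real^'n1) set" and Z :: "(real^'n2) set"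
    and phi :: "real^'m \<Rightarrow> real" and gphi :: "real^'m \<Rightarrow> real^'m" and Sphi :: "(real^'m) set"
    and phix :: "real^'n1 \<Rightarrow> real" and gx :: "real^'n1 \<Rightarrow> real^'n1" and Sx :: "(real^'n1) set"
    and phiz :: "real^'n2 \<Rightarrow> real" and gz :: "real^'n2 \<Rightarrow> real^'n2" and Sz :: "(real^'n2) set"
    and x :: "nat \<Rightarrow> real^'n1" and z :: "nat \<Rightarrow> real^'n2" and y :: "nat \<Rightarrow> real^'m"
    and xs :: "real^'n1" and zs :: "real^'n2" and ys :: "real^'m"
    and rho tau rhox rhoz alpha p gamma :: real
  assumes convX: "convex X" and convZ: "convex Z"
    and gen_phi: "bregman_gen Sphi phi gphi"
    and gen_phix: "bregman_gen Sx phix gx"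
    and gen_phiz: "bregman_gen Sz phiz gz"
    and params: "rho > 0" "tau > 0" "rhox \<ge> 0" "rhoz \<ge> 0"
    and x_in: "\<And>t. x (Suc t) \<in> X"
    and x_min: "\<And>t u. u \<in> X \<Longrightarrow> c - A *v u \<in> Sphi \<Longrightarrow> u \<in> Sx \<Longrightarrow>
        f (x (Suc t)) + ereal (y t \<bullet> (A *v x (Suc t) + B *v z t - c)
            + rho * breg phi gphi (c - A *v x (Suc t)) (B *v z t)
            + rhox * breg phix gx (x (Suc t)) (x t))
        \<le> f u + ereal (y t \<bullet> (A *v u + B *v z t - c)
            + rho * breg phi gphi (c - A *v u) (B *v z t)
            + rhox * breg phix gx u (x t))"
    and z_in: "\<And>t. z (Suc t) \<in> Z"
    and z_min: "\<And>t v. v \<in> Z \<Longrightarrow> B *v v \<in> Sphi \<Longrightarrow> v \<in> Sz \<Longrightarrow>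
        g (z (Suc t)) + ereal (y t \<bullet> (A *v x (Suc t) + B *v z (Suc t) - c)
            + rho * breg phi gphi (B *v z (Suc t)) (c - A *v x (Suc t))
            + rhoz * breg phiz gz (z (Suc t)) (z t))
        \<le> g v + ereal (y t \<bullet> (A *v x (Suc t) + B *v v - c)
            + rho * breg phi gphi (B *v v) (c - A *v x (Suc t))
            + rhoz * breg phiz gz v (z t))"
    and y_upd: "\<And>t. y (Suc t) = y t + tau *\<^sub>R (A *v x (Suc t) + B *v z (Suc t) - c)"
    and dom_phi: "\<And>t. c - A *v x (Suc t) \<in> Sphi" "\<And>t. B *v z t \<in> Sphi" "B *v zs \<in> Sphi"
    and dom_x: "\<And>t. x t \<in> Sx" "xs \<in> Sx"
    and dom_z: "\<And>t. z t \<in> Sz" "zs \<in> Sz"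
    and opt_x: "\<And>t. - (transpose A *v (y t + rho *\<^sub>R (gphi (B *v z t) - gphi (c - A *v x (Suc t)))))
        - rhox *\<^sub>R (gx (x (Suc t)) - gx (x t)) \<in> subdiff f (x (Suc t))"
    and opt_z: "\<And>t. - (transpose B *v (y t + rho *\<^sub>R (gphi (B *v z (Suc t)) - gphi (c - A *v x (Suc t)))))
        - rhoz *\<^sub>R (gz (z (Suc t)) - gz (z t)) \<in> subdiff g (z (Suc t))"
    and f_cpc: "closed_efun f" "proper_fun f" "convex_efun f"
    and g_cpc: "closed_efun g" "proper_fun g" "convex_efun g"
    and opt_exists: "\<exists>xo zo. xo \<in> X \<and> zo \<in> Z \<and> A *v xo + B *v zo = c \<and>
        (\<forall>x' z'. x' \<in> X \<and> z' \<in> Z \<and> A *v x' + B *v z' = c \<longrightarrow> f xo + g zo \<le> f x' + g z')"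
    and p_pos: "p > 0" and alpha_pos: "alpha > 0"
    and strong: "\<And>u v. u \<in> Sphi \<Longrightarrow> v \<in> Sphi \<Longrightarrow>
        breg phi gphi u v \<ge> alpha / 2 * (pnorm p (u - v))\<^sup>2"
    and kkt: "- (transpose A *v ys) \<in> subdiff f xs" "- (transpose B *v ys) \<in> subdiff g zs"
        "A *v xs + B *v zs = c"
    and gamma_pos: "gamma > 0"
    and gamma_lt: "gamma < alpha * min 1 (real CARD('m) powr (2 / p - 1)) / 2"
    and tau_le: "tau \<le> (alpha * min 1 (real CARD('m) powr (2 / p - 1)) - 2 * gamma) * rho"
  shows "rhox / rho * breg phix gx (x (Suc t)) (x t) + rhoz / rho * breg phiz gz (z (Suc t)) (z t)
           + breg phi gphi (c - A *v x (Suc t)) (B *v z t)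
           + gamma * (norm (A *v x (Suc t) + B *v z (Suc t) - c))\<^sup>2
         \<le> (1 / (2 * tau * rho) * (norm (ys - y t))\<^sup>2 + breg phi gphi (B *v zs) (B *v z t)
              + rhox / rho * breg phix gx xs (x t) + rhoz / rho * breg phiz gz zs (z t))
           - (1 / (2 * tau * rho) * (norm (ys - y (Suc t)))\<^sup>2 + breg phi gphi (B *v zs) (B *v z (Suc t))
              + rhox / rho * breg phix gx xs (x (Suc t)) + rhoz / rho * breg phiz gz zs (z (Suc t)))"
    (is "?L \<le> ?R")
proof -
  define r where "r = A *v x (Suc t) + B *v z (Suc t) - c"
  note variational = admm_step_variational_inequality[OF f_cpc(2) g_cpc(2) opt_x[of t] opt_z[of t] kkt,
      where phix = phix and phiz = phiz and phi = phi]
  have dual: "(ys - y t) \<bullet> r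
      = ((norm (ys - y t))\<^sup>2 - (norm (ys - y (Suc t)))\<^sup>2) / (2 * tau) + tau / 2 * (norm r)\<^sup>2"
    using inner_dual_step_eq[of tau ys "y t" r] params(2) by (simp add: y_upd r_def)
  have "B *v z (Suc t) - (c - A *v x (Suc t)) = r"
    by (simp add: r_def algebra_simps)
  then have absorb: "rho * gamma * (norm r)\<^sup>2 + tau / 2 * (norm r)\<^sup>2
      \<le> rho * breg phi gphi (B *v z (Suc t)) (c - A *v x (Suc t))"
    using residual_le_breg[OF strong[OF dom_phi(2)[of "Suc t"] dom_phi(1)[of t]]
        p_pos alpha_pos params(1) tau_le] by simp
  show ?thesis
  proof (rule mult_left_le_imp_le[OF _ params(1)])
    show "rho * ?L \<le> rho * ?R"
      using variational dual absorb params(1,2) unfolding r_def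
      by (simp add: ring_distribs diff_divide_distrib mult.assoc)
  qed
qed

end
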